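(* Let $b=1/2$, let $\mathcal B$ be a Hamel basis of $\mathbb{R}$ over $\mathbb{Q}$ with $b\in\mathcal B$, and let $\pi:\mathbb{R}\to[0,1]$ be defined by $\pi(x)=\lambda^x_b-\lfloor\lambda^x_b\rfloor$ if $\lambda^x_b$ is not an odd integer, and $\pi(x)=1$ if $\lambda^x_b$ is an odd integer. Then $\pi$ is a minimal valid function for $I_b$. Equivalently, $\pi\ge 0$ and: (i) $\pi(x)+\pi(y)\ge\pi(x+y)$ for all $x,y\in\mathbb{R}$; (ii) $\pi(x)+\pi(b-x)=1$ for all $x\in\mathbb{R}$; (iii) $\pi(z)=0$ for all $z\in\mathbb{Z}$.
   Context: For $b\in\mathbb{R}\setminus\mathbb{Z}$, $I_b$ is the set of finite-support functions $y:\mathbb{R}\to\mathbb{Z}_+$ (i.e. $y(x)=0$ for all but finitely many $x$) such that $\sum_{x\in\mathbb{R}} y(x)\,x\equiv b \pmod 1$. A function $\pi:\mathbb{R}\to\mathbb{R}_+$ is a (nonnegative) valid function for $I_b$ if $\sum_{x\in\mathbb{R}}\pi(x)y(x)\ge 1$ for every $y\in I_b$. A valid function $\pi':\mathbb{R}\to\mathbb{R}_+$ dominates a valid function $\pi:\mathbb{R}\to\mathbb{R}_+$ if $\pi'\ne\pi$ and $\pi'\le\pi$ pointwise; a valid function $\pi:\mathbb{R}\to\mathbb{R}_+$ is minimal if it is not dominated by any valid function $\mathbb{R}\to\mathbb{R}_+$. (By Gomory–Johnson, a function $\pi:\mathbb{R}\to\mathbb{R}_+$ is minimal iff it satisfies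 (i), (ii), (iii).) A Hamel basis is a basis of $\mathbb{R}$ as a vector space over $\mathbb{Q}$; for $x\in\mathbb{R}$, $\lambda^x_b\in\mathbb{Q}$ denotes the coefficient of the basis element $b$ in the unique expression of $x$ as a finite rational linear combination of elements of $\mathcal B$. *)

theory Defs
  imports Complex_Main
begin

definition qscale :: "rat \<Rightarrow> real \<Rightarrow> real" where
  "qscale q x = real_of_rat q * x"

lemma vector_space_qscale: "vector_space qscale"
  by unfold_locales (auto simp: qscale_def algebra_simps of_rat_add of_rat_mult)

definition hamel_basis :: "real set \<Rightarrow> bool" where
  "hamel_basis B \<longleftrightarrow> module.independent qscale B \<and> module.span qscale B = UNIV"

definition hamel_coeff :: "real set \<Rightarrow> real \<Rightarrow> real \<Rightarrow> rat" where
  "hamel_coeff B x b = module.representation qscale B x b"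

definition Ib :: "real \<Rightarrow> (real \<Rightarrow> nat) set" where
  "Ib b = {y. finite {x. y x \<noteq> 0} \<and>
              (\<Sum>x\<in>{x. y x \<noteq> 0}. real (y x) * x) - b \<in> \<int>}"

definition valid_fn :: "real \<Rightarrow> (real \<Rightarrow> real) \<Rightarrow> bool" where
  "valid_fn b \<pi> \<longleftrightarrow> (\<forall>x. \<pi> x \<ge> 0) \<and>
     (\<forall>y\<in>Ib b. (\<Sum>x\<in>{x. y x \<noteq> 0}. \<pi> x * real (y x)) \<ge> 1)"

definition dominates :: "real \<Rightarrow> (real \<Rightarrow> real) \<Rightarrow> (real \<Rightarrow> real) \<Rightarrow> bool" where
  "dominates b \<pi>' \<pi> \<longleftrightarrow> valid_fn b \<pi>' \<and> valid_fn b \<pi> \<and> \<pi>' \<noteq> \<pi> \<and> (\<forall>x. \<pi>' x \<le> \<pi> x)"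

definition minimal_valid :: "real \<Rightarrow> (real \<Rightarrow> real) \<Rightarrow> bool" where
  "minimal_valid b \<pi> \<longleftrightarrow> valid_fn b \<pi> \<and> \<not> (\<exists>\<pi>'. dominates b \<pi>' \<pi>)"

end

theory Submission imports Defs begin

text \<open>The function factors as \<open>\<pi> = of_rat \<circ> \<phi> \<circ> \<lambda>\<^sub>b\<close>, where the coefficient map \<open>\<lambda>\<^sub>b\<close> is
  \<open>\<rat>\<close>-linear with \<open>\<lambda>\<^sub>b(b) = 1\<close> and \<open>\<lambda>\<^sub>b(k) = 2k\<close> for integers \<open>k\<close>, and the one-dimensional
  profile \<open>\<phi>\<close> (the fractional part, raised to 1 at odd integers) is subadditive and
  satisfies \<open>\<phi>(l) + \<phi>(1 - l) = 1\<close>. Subadditivity, \<open>\<pi>(0) = 0\<close> and \<open>\<pi> = 1\<close> on \<open>b + \<int>\<close> give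
  validity; the symmetry \<open>\<pi>(x) + \<pi>(b - x) = 1\<close> gives minimality, since a smaller valid
  function would violate the constraint for the point \<open>x + (b - x) = b\<close>.\<close>

definition odd_integer :: "'a::floor_ceiling \<Rightarrow> bool" where
  "odd_integer l \<longleftrightarrow> (\<exists>k::int. l = of_int (2 * k + 1))"

definition frac_or_one :: "'a::floor_ceiling \<Rightarrow> 'a" where
  "frac_or_one l = (if odd_integer l then 1 else frac l)"

lemma odd_integer_of_int [simp]: "odd_integer (of_int m :: 'a::floor_ceiling) \<longleftrightarrow> odd m"
proof
  assume "odd_integer (of_int m :: 'a)"
  then obtain k where "(of_int m :: 'a) = of_int (2 * k + 1)" by (auto simp: odd_integer_def)
  then have "m = 2 * k + 1" by (simp only: of_int_eq_iff)
  then show "odd m" by simp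
next
  assume "odd m"
  then obtain k where "m = 2 * k + 1" by (blast elim: oddE)
  then show "odd_integer (of_int m :: 'a)" by (auto simp: odd_integer_def)
qed

lemma odd_integer_imp_Ints: "odd_integer l \<Longrightarrow> l \<in> \<int>"
  by (auto simp: odd_integer_def)

lemma frac_le_frac_or_one: "frac l \<le> frac_or_one l"
  using frac_lt_1[of l] by (auto simp: frac_or_one_def)

lemma frac_or_one_nonneg: "0 \<le> frac_or_one l"
  using frac_le_frac_or_one[of l] frac_ge_0[of l] by linarith

lemma frac_or_one_of_int [simp]: "frac_or_one (of_int m) = (if odd m then 1 else 0)"
  by (simp add: frac_or_one_def)

lemma frac_or_one_subadditive: "frac_or_one (a + b) \<le> frac_or_one a + frac_or_one b"
proof (cases "odd_integer (a + b)")
  case False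
  then have "frac_or_one (a + b) = frac (a + b)" by (simp add: frac_or_one_def)
  also have "\<dots> \<le> frac a + frac b" by (simp add: frac_add)
  finally show ?thesis using frac_le_frac_or_one[of a] frac_le_frac_or_one[of b] by linarith
next
  case True
  then have ab: "a + b \<in> \<int>" and one: "frac_or_one (a + b) = 1"
    by (auto simp: frac_or_one_def odd_integer_imp_Ints)
  show ?thesis
  proof (cases "a \<in> \<int>")
    case True
    then have "b \<in> \<int>" using ab by (metis Ints_diff add_diff_cancel_left')
    then obtain m n where mn: "a = of_int m" "b = of_int n" using \<open>a \<in> \<int>\<close> by (auto elim!: Ints_cases)
    then have "odd (m + n)" using \<open>odd_integer (a + b)\<close> by (metis odd_integer_of_int of_int_add)
    then show ?thesis using one mn by auto
  next
    case False
    have "frac a > 0" using False frac_ge_0[of a] by (metis frac_eq_0_iff order_le_less)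
    moreover have "frac (a + b) = 0" using ab by (simp add: frac_eq_0_iff)
    ultimately have "1 \<le> frac a + frac b"
      using frac_add[of a b] frac_ge_0[of b] by (simp only: split: if_splits)
    then show ?thesis using one frac_le_frac_or_one[of a] frac_le_frac_or_one[of b] by linarith
  qed
qed

lemma frac_or_one_complement: "frac_or_one l + frac_or_one (1 - l) = 1"
proof (cases "l \<in> \<int>")
  case True
  then obtain m where m: "l = of_int m" by (auto elim: Ints_cases)
  have "frac_or_one (1 - l) = (if odd (1 - m) then 1 else 0)"
    using frac_or_one_of_int[of "1 - m", where 'a='a] by (simp add: m)
  then show ?thesis by (simp add: m)
next
  case False
  then have "\<not> odd_integer l" "\<not> odd_integer (1 - l)"
    using odd_integer_imp_Ints[of l] odd_integer_imp_Ints[of "1 - l"] Ints_diff[OF Ints_1, of "1 - l"]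
    by auto
  moreover have "frac (1 - l) = 1 - frac l"
    using frac_1_eq[of "- l"] False by (simp add: frac_neg)
  ultimately show ?thesis by (simp add: frac_or_one_def)
qed

lemma subadditive_sum:
  fixes p :: "'a::comm_monoid_add \<Rightarrow> 'b::ordered_comm_monoid_add"
  assumes sub: "\<And>a b. p (a + b) \<le> p a + p b" and p0: "p 0 = 0"
  shows "p (\<Sum>i\<in>S. f i) \<le> (\<Sum>i\<in>S. p (f i))"
proof (induction S rule: infinite_finite_induct)
  case (insert a S)
  have "p (\<Sum>i\<in>insert a S. f i) = p (f a + (\<Sum>i\<in>S. f i))" using insert by simp
  also have "\<dots> \<le> p (f a) + p (\<Sum>i\<in>S. f i)" by (rule sub)
  also have "\<dots> \<le> p (f a) + (\<Sum>i\<in>S. p (f i))" using insert by (simp add: add_left_mono)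
  finally show ?case using insert by simp
qed (simp_all add: p0)

lemma subadditive_of_nat_mult:
  fixes p :: "real \<Rightarrow> real"
  assumes sub: "\<And>a b. p (a + b) \<le> p a + p b" and p0: "p 0 = 0"
  shows "p (real n * x) \<le> p x * real n"
  using subadditive_sum[of p "\<lambda>_. x" "{..<n}", OF sub p0] by (simp add: mult.commute)

lemma valid_fn_if_subadditive:
  fixes \<pi> :: "real \<Rightarrow> real"
  assumes nonneg: "\<And>x. 0 \<le> \<pi> x" and sub: "\<And>x y. \<pi> (x + y) \<le> \<pi> x + \<pi> y"
    and p0: "\<pi> 0 = 0" and one: "\<And>k::int. \<pi> (b + of_int k) = 1"
  shows "valid_fn b \<pi>"
  unfolding valid_fn_def
proof (intro conjI allI ballI)
  fix y assume "y \<in> Ib b"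
  then have "(\<Sum>x\<in>{x. y x \<noteq> 0}. real (y x) * x) - b \<in> \<int>"
    unfolding Ib_def by blast
  then obtain k where "(\<Sum>x\<in>{x. y x \<noteq> 0}. real (y x) * x) - b = of_int k"
    by (rule Ints_cases)
  then have k: "(\<Sum>x\<in>{x. y x \<noteq> 0}. real (y x) * x) = b + of_int k"
    by (simp only: diff_eq_eq add.commute)
  have "1 = \<pi> (\<Sum>x\<in>{x. y x \<noteq> 0}. real (y x) * x)" by (simp only: k one)
  also have "\<dots> \<le> (\<Sum>x\<in>{x. y x \<noteq> 0}. \<pi> (real (y x) * x))" by (rule subadditive_sum[OF sub p0])
  also have "\<dots> \<le> (\<Sum>x\<in>{x. y x \<noteq> 0}. \<pi> x * real (y x))"
    by (rule sum_mono) (rule subadditive_of_nat_mult[OF sub p0])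
  finally show "1 \<le> (\<Sum>x\<in>{x. y x \<noteq> 0}. \<pi> x * real (y x))" .
qed (rule nonneg)

lemma symmetric_not_dominated:
  assumes sym: "\<And>x. \<pi> x + \<pi> (b - x) = 1"
  shows "\<not> dominates b \<pi>' \<pi>"
proof
  assume "dominates b \<pi>' \<pi>"
  then have v': "valid_fn b \<pi>'" and le: "\<And>x. \<pi>' x \<le> \<pi> x" and "\<pi>' \<noteq> \<pi>"
    by (auto simp: dominates_def)
  then obtain x where lt: "\<pi>' x < \<pi> x" by (meson ext order_less_le)
  define y :: "real \<Rightarrow> nat" where "y t = of_bool (t = x) + of_bool (t = b - x)" for t
  have supp: "{t. y t \<noteq> 0} = {x, b - x}" by (auto simp: y_def)
  have "(\<Sum>t\<in>{x, b - x}. real (y t) * t) = b"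
    by (cases "x = b - x") (auto simp: y_def)
  then have "y \<in> Ib b" unfolding Ib_def mem_Collect_eq supp by simp
  then have "1 \<le> (\<Sum>t\<in>{t. y t \<noteq> 0}. \<pi>' t * real (y t))"
    using v' unfolding valid_fn_def by blast
  also have "\<dots> = (\<Sum>t\<in>{x, b - x}. \<pi>' t * real (y t))" by (simp only: supp)
  also have "\<dots> = \<pi>' x + \<pi>' (b - x)"
    by (cases "x = b - x") (auto simp: y_def)
  finally show False using lt le[of "b - x"] sym[of x] by linarith
qed

context
  fixes B :: "real set"
  assumes hB: "hamel_basis B"
begin

interpretation Q: vector_space qscale by (rule vector_space_qscale)

lemma hamel_independent: "Q.independent B" and hamel_spans: "x \<in> Q.span B"
  using hB by (auto simp: hamel_basis_def)

lemma hamel_coeff_add: "hamel_coeff B (x + y) b = hamel_coeff B x b + hamel_coeff B y b"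
  unfolding hamel_coeff_def using Q.representation_add[OF hamel_independent hamel_spans hamel_spans] by simp

lemma hamel_coeff_diff: "hamel_coeff B (x - y) b = hamel_coeff B x b - hamel_coeff B y b"
  unfolding hamel_coeff_def using Q.representation_diff[OF hamel_independent hamel_spans hamel_spans] by simp

lemma hamel_coeff_scale: "hamel_coeff B (qscale r x) b = r * hamel_coeff B x b"
  unfolding hamel_coeff_def using Q.representation_scale[OF hamel_independent hamel_spans] by simp

lemma hamel_coeff_basis_self: "b \<in> B \<Longrightarrow> hamel_coeff B b b = 1"
  unfolding hamel_coeff_def using Q.representation_basis[OF hamel_independent] by simp

end

theorem mainTheorem1:
  fixes B :: "real set" and \<pi> :: "real \<Rightarrow> real"
  assumes hB: "hamel_basis B"
    and hb: "(1/2 :: real) \<in> B"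
    and h\<pi>: "\<And>x. \<pi> x = (let l = hamel_coeff B x (1/2) in
                 if (\<exists>k::int. l = of_int (2 * k + 1)) then 1
                 else real_of_rat (l - of_int \<lfloor>l\<rfloor>))"
  shows "minimal_valid (1/2) \<pi>
       \<and> (\<forall>x. \<pi> x \<ge> 0)
       \<and> (\<forall>x y. \<pi> x + \<pi> y \<ge> \<pi> (x + y))
       \<and> (\<forall>x. \<pi> x + \<pi> (1/2 - x) = 1)
       \<and> (\<forall>z\<in>\<int>. \<pi> z = 0)"
proof -
  define L where "L x = hamel_coeff B x (1/2)" for x
  have \<pi>_eq: "\<pi> x = real_of_rat (frac_or_one (L x))" for x
    unfolding h\<pi> L_def frac_or_one_def odd_integer_def frac_def Let_def by simp
  note L_add = hamel_coeff_add[OF hB, of _ _ "1/2", folded L_def]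
  have L_half: "L (1/2) = 1" using hamel_coeff_basis_self[OF hB hb] by (simp add: L_def)
  have L_int: "L (of_int k) = of_int (2 * k)" for k
  proof -
    have "qscale (of_int (2 * k)) (1/2) = of_int k" by (simp add: qscale_def of_rat_mult)
    then show ?thesis using hamel_coeff_scale[OF hB, of "of_int (2 * k)" "1/2" "1/2"] L_half
      by (simp add: L_def)
  qed
  have nonneg: "0 \<le> \<pi> x" for x by (simp add: \<pi>_eq frac_or_one_nonneg)
  have sub: "\<pi> (x + y) \<le> \<pi> x + \<pi> y" for x y
    unfolding \<pi>_eq L_add of_rat_add[symmetric] of_rat_less_eq by (rule frac_or_one_subadditive)
  have sym: "\<pi> x + \<pi> (1/2 - x) = 1" for x
    unfolding \<pi>_eq hamel_coeff_diff[OF hB, of _ _ "1/2", folded L_def] L_half of_rat_add[symmetric]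
    by (simp add: frac_or_one_complement)
  have zero: "\<pi> (of_int k) = 0" for k by (simp add: \<pi>_eq L_int del: of_int_mult)
  have L_half_plus_int: "L (1/2 + of_int k) = of_int (2 * k + 1)" for k
    by (simp add: L_add L_half L_int)
  have "\<pi> 0 = 0" using zero[of 0] by simp
  moreover have "\<pi> (1/2 + of_int k) = 1" for k
    unfolding \<pi>_eq L_half_plus_int frac_or_one_of_int by simp
  ultimately have "valid_fn (1/2) \<pi>" by (rule valid_fn_if_subadditive[OF nonneg sub])
  moreover have "\<pi> z = 0" if "z \<in> \<int>" for z using that zero by (auto elim: Ints_cases)
  ultimately show ?thesis
    using symmetric_not_dominated[of \<pi>] nonneg sub sym unfolding minimal_valid_def by blast
qed

end
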